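(* Let $(S,\Delta,\mathbb{P})$ be a probability space, $(U,d)$ a separable metric space, $\mathfrak{X}$ the set of $U$-valued random variables on $S$, $r\geq0$, and $\mathcal{I}$ an admissible ideal on $\mathbb{N}$. Then for every sequence $\underline{X}=\{X_n\}$ in $\mathfrak{X}$, the set $\Gamma^{r^s}_{\underline{X}}(\mathcal{I}^{\mathbb{P}})$ is closed in $(\mathfrak{X}^0,\rho)$.
   Context: The Ky Fan metric is $\rho(X,Y)=\inf\{\varepsilon>0:\mathbb{P}(d(X,Y)>\varepsilon)\leq\varepsilon\}$; $\mathfrak{X}^0$ is the set of equivalence classes of $\mathfrak{X}$ under almost sure equality, on which $\rho$ is a metric. An ideal on $\mathbb{N}$ is a family $\mathcal{I}\subseteq\mathcal{P}(\mathbb{N})$ with $\varnothing\in\mathcal{I}$, closed under finite unions and under subsets; it is admissible if $\mathbb{N}\notin\mathcal{I}$ and $\{t\}\in\mathcal{I}$ for every $t\in\mathbb{N}$. $\Gamma^{r^s}_{\underline{X}}(\mathcal{I}^{\mathbb{P}})$ is the set of $Y\in\mathfrak{X}$ with $\{n:\mathbb{P}(d(X_n,Y)<r+\varepsilon)>1-\delta\}\notin\mathcal{I}$ for all $\varepsilon,\delta>0$. *)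

theory Defs
  imports "HOL-Probability.Probability"
begin

definition ideal_on_nat :: "nat set set \<Rightarrow> bool" where
  "ideal_on_nat I \<longleftrightarrow> {} \<in> I
     \<and> (\<forall>A\<in>I. \<forall>B\<in>I. A \<union> B \<in> I)
     \<and> (\<forall>A\<in>I. \<forall>B. B \<subseteq> A \<longrightarrow> B \<in> I)"

definition admissible_ideal :: "nat set set \<Rightarrow> bool" where
  "admissible_ideal I \<longleftrightarrow> ideal_on_nat I \<and> UNIV \<notin> I \<and> (\<forall>t. {t} \<in> I)"

definition rand_vars :: "'a measure \<Rightarrow> ('a \<Rightarrow> 'b::metric_space) set" where
  "rand_vars M = {X. X \<in> borel_measurable M}"

text \<open>Ky Fan metric (a pseudometric on random variables, a metric on a.s.-classes).\<close>
definition ky_fan :: "'a measure \<Rightarrow> ('a \<Rightarrow> 'b::metric_space) \<Rightarrow> ('a \<Rightarrow> 'b) \<Rightarrow> real" where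
  "ky_fan M X Y = Inf {e. e > 0 \<and> measure M {w\<in>space M. dist (X w) (Y w) > e} \<le> e}"

text \<open>Closedness in the quotient space (X^0, rho) of a set A of random variables:
  every a.s.-class in the rho-closure of the classes of A is the class of an element of A.\<close>
definition ky_fan_closed :: "'a measure \<Rightarrow> ('a \<Rightarrow> 'b::metric_space) set \<Rightarrow> bool" where
  "ky_fan_closed M A \<longleftrightarrow>
     (\<forall>Y\<in>rand_vars M. (\<forall>e>0. \<exists>Z\<in>A. ky_fan M Z Y < e)
        \<longrightarrow> (\<exists>Z\<in>A. AE w in M. Z w = Y w))"

definition rough_stat_limit_set ::
  "'a measure \<Rightarrow> nat set set \<Rightarrow> real \<Rightarrow> (nat \<Rightarrow> 'a \<Rightarrow> 'b::metric_space) \<Rightarrow> ('a \<Rightarrow> 'b) set" where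
  "rough_stat_limit_set M I r X =
     {Y\<in>rand_vars M. \<forall>\<epsilon>>0. \<forall>\<delta>>0.
        {n. measure M {w\<in>space M. dist (X n w) (Y w) < r + \<epsilon>} > 1 - \<delta>} \<notin> I}"

end

theory Submission
  imports Defs
begin

text \<open>If \<open>Z\<close> lies in the rough limit set and \<open>\<rho>(Z, Y) < \<eta>\<close>, then outside an event of
  probability at most \<open>\<eta>\<close> the distance of \<open>Z\<close> and \<open>Y\<close> is at most \<open>\<eta>\<close>; by the triangle inequality,
  every index \<open>n\<close> with \<open>P(d(X\<^sub>n, Z) < r + \<epsilon>/2) > 1 - \<delta>/2\<close> then satisfies
  \<open>P(d(X\<^sub>n, Y) < r + \<epsilon>) > 1 - \<delta>\<close> once \<open>\<eta> \<le> min (\<epsilon>/2) (\<delta>/2)\<close>. The first set of indices is not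
  in \<open>\<I>\<close>, hence neither is the larger second one, so \<open>Y\<close> itself lies in the rough limit set.
  Separability of \<open>U\<close> is needed only to make \<open>d(X\<^sub>n, Y)\<close> a random variable.\<close>

lemma dist_eq_INF_dense:
  fixes C :: "'b::metric_space set"
  assumes dense: "closure C = UNIV"
  shows "dist x z = (INF q\<in>C. dist x q + dist q z)"
proof (rule antisym)
  show "dist x z \<le> (INF q\<in>C. dist x q + dist q z)"
    using dense by (intro cINF_greatest) (auto intro: dist_triangle)
next
  have bdd: "bdd_below ((\<lambda>q. dist x q + dist q z) ` C)"
    by (rule bdd_belowI[of _ 0]) auto
  show "(INF q\<in>C. dist x q + dist q z) \<le> dist x z"
  proof (rule field_le_epsilon)
    fix e :: real assume "e > 0"
    obtain q where q: "q \<in> C" "dist q x < e/2"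
      using closure_approachable[of x C] dense \<open>e > 0\<close> by (metis UNIV_I half_gt_zero)
    have "(INF q\<in>C. dist x q + dist q z) \<le> dist x q + dist q z"
      by (rule cINF_lower[OF bdd q(1)])
    also have "\<dots> \<le> dist x z + e"
      using q(2) dist_triangle[of q z x] dist_commute[of x q] by linarith
    finally show "(INF q\<in>C. dist x q + dist q z) \<le> dist x z + e" .
  qed
qed

lemma borel_measurable_dist_separable:
  fixes X Z :: "'a \<Rightarrow> 'b::metric_space"
  assumes "separable_space (euclidean :: 'b topology)"
    and X: "X \<in> borel_measurable M" and Z: "Z \<in> borel_measurable M"
  shows "(\<lambda>w. dist (X w) (Z w)) \<in> borel_measurable M"
proof -
  obtain C :: "'b set" where C: "countable C" "closure C = UNIV"
    using assms(1) unfolding separable_space_def by auto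
  have "(\<lambda>w. INF q\<in>C. dist (X w) q + dist q (Z w)) \<in> borel_measurable M"
  proof (rule borel_measurable_cINF_real[OF C(1)])
    fix q :: 'b
    have "continuous_on UNIV (\<lambda>x. dist x q)" "continuous_on UNIV (\<lambda>x. dist q x)"
      by (intro continuous_intros)+
    then show "(\<lambda>w. dist (X w) q + dist q (Z w)) \<in> borel_measurable M"
      by (intro borel_measurable_add borel_measurable_continuous_on[OF _ X]
          borel_measurable_continuous_on[OF _ Z])
  qed
  moreover have "(\<lambda>w. dist (X w) (Z w)) = (\<lambda>w. INF q\<in>C. dist (X w) q + dist q (Z w))"
    using dist_eq_INF_dense[OF C(2)] by blast
  ultimately show ?thesis
    by simp
qed

lemma (in prob_space) ky_fan_lessE:
  assumes "ky_fan M Z Y < \<eta>"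
  obtains e where "e < \<eta>" "measure M {w\<in>space M. dist (Z w) (Y w) > e} \<le> e"
proof -
  let ?S = "{e. e > 0 \<and> measure M {w\<in>space M. dist (Z w) (Y w) > e} \<le> e}"
  have "1 \<in> ?S"
    by (simp add: prob_le_1)
  then obtain e where "e \<in> ?S" "e < \<eta>"
    using assms cInf_lessD[of ?S \<eta>] unfolding ky_fan_def by blast
  then show ?thesis
    using that by blast
qed

lemma (in finite_measure) measure_dist_less_le_add:
  fixes X Y Z :: "'a \<Rightarrow> 'b::metric_space"
  assumes [measurable]: "(\<lambda>w. dist (X w) (Y w)) \<in> borel_measurable M"
    "(\<lambda>w. dist (Z w) (Y w)) \<in> borel_measurable M"
  shows "measure M {w\<in>space M. dist (X w) (Z w) < a}
    \<le> measure M {w\<in>space M. dist (X w) (Y w) < a + e} + measure M {w\<in>space M. dist (Z w) (Y w) > e}"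
proof -
  let ?close = "{w\<in>space M. dist (X w) (Y w) < a + e}"
  let ?far = "{w\<in>space M. dist (Z w) (Y w) > e}"
  have sets: "?close \<in> sets M" "?far \<in> sets M"
    by measurable
  have "{w\<in>space M. dist (X w) (Z w) < a} \<subseteq> ?close \<union> ?far"
  proof (intro subsetI, unfold mem_Collect_eq Un_iff)
    fix w assume "w \<in> space M \<and> dist (X w) (Z w) < a"
    then show "(w \<in> space M \<and> dist (X w) (Y w) < a + e) \<or> (w \<in> space M \<and> dist (Z w) (Y w) > e)"
      using dist_triangle[of "X w" "Y w" "Z w"] by linarith
  qed
  then have "measure M {w\<in>space M. dist (X w) (Z w) < a} \<le> measure M (?close \<union> ?far)"
    using sets by (intro finite_measure_mono) auto
  also have "\<dots> \<le> measure M ?close + measure M ?far"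
    using sets by (rule measure_Un_le)
  finally show ?thesis .
qed

lemma ideal_on_nat_notin_mono:
  assumes "ideal_on_nat I" "A \<notin> I" "A \<subseteq> B"
  shows "B \<notin> I"
  using assms unfolding ideal_on_nat_def by blast

lemma mem_rough_stat_limit_set_if_ky_fan_approx:
  fixes X :: "nat \<Rightarrow> 'a \<Rightarrow> 'b::metric_space"
  assumes "prob_space M" and sep: "separable_space (euclidean :: 'b topology)"
    and "ideal_on_nat I" and X: "\<And>n. X n \<in> borel_measurable M"
    and Y: "Y \<in> rand_vars M"
    and approx: "\<forall>\<eta>>0. \<exists>Z\<in>rough_stat_limit_set M I r X. ky_fan M Z Y < \<eta>"
  shows "Y \<in> rough_stat_limit_set M I r X"
  unfolding rough_stat_limit_set_def
proof (intro CollectI conjI allI impI Y)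
  interpret prob_space M by fact
  fix \<epsilon> \<delta> :: real assume "\<epsilon> > 0" "\<delta> > 0"
  then obtain Z where Z: "Z \<in> rough_stat_limit_set M I r X"
    and close: "ky_fan M Z Y < min (\<epsilon>/2) (\<delta>/2)"
    using approx by (meson half_gt_zero min_less_iff_conj)
  from close obtain e where "e < min (\<epsilon>/2) (\<delta>/2)"
    and small: "measure M {w\<in>space M. dist (Z w) (Y w) > e} \<le> e"
    by (rule ky_fan_lessE)
  have Zm: "Z \<in> borel_measurable M" and Ym: "Y \<in> borel_measurable M"
    using Y Z by (simp_all add: rough_stat_limit_set_def rand_vars_def)
  have "{n. measure M {w\<in>space M. dist (X n w) (Z w) < r + \<epsilon>/2} > 1 - \<delta>/2}
      \<subseteq> {n. measure M {w\<in>space M. dist (X n w) (Y w) < r + \<epsilon>} > 1 - \<delta>}"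
  proof (intro subsetI, unfold mem_Collect_eq)
    fix n assume "measure M {w\<in>space M. dist (X n w) (Z w) < r + \<epsilon>/2} > 1 - \<delta>/2"
    have [measurable]: "(\<lambda>w. dist (X n w) (Y w)) \<in> borel_measurable M"
      by (rule borel_measurable_dist_separable[OF sep X Ym])
    have "measure M {w\<in>space M. dist (X n w) (Z w) < r + \<epsilon>/2}
        \<le> measure M {w\<in>space M. dist (X n w) (Y w) < r + \<epsilon>/2 + e}
          + measure M {w\<in>space M. dist (Z w) (Y w) > e}"
      by (intro measure_dist_less_le_add borel_measurable_dist_separable[OF sep] X Zm Ym)
    also have "measure M {w\<in>space M. dist (X n w) (Y w) < r + \<epsilon>/2 + e}
        \<le> measure M {w\<in>space M. dist (X n w) (Y w) < r + \<epsilon>}"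
      using \<open>e < min (\<epsilon>/2) (\<delta>/2)\<close> by (intro finite_measure_mono) auto
    finally show "measure M {w\<in>space M. dist (X n w) (Y w) < r + \<epsilon>} > 1 - \<delta>"
      using \<open>measure M {w\<in>space M. dist (X n w) (Z w) < r + \<epsilon>/2} > 1 - \<delta>/2\<close>
        small \<open>e < min (\<epsilon>/2) (\<delta>/2)\<close> by linarith
  qed
  moreover have "{n. measure M {w\<in>space M. dist (X n w) (Z w) < r + \<epsilon>/2} > 1 - \<delta>/2} \<notin> I"
    using Z \<open>\<epsilon> > 0\<close> \<open>\<delta> > 0\<close> unfolding rough_stat_limit_set_def by auto
  ultimately show "{n. measure M {w\<in>space M. dist (X n w) (Y w) < r + \<epsilon>} > 1 - \<delta>} \<notin> I"
    using ideal_on_nat_notin_mono[OF \<open>ideal_on_nat I\<close>] by blast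
qed

theorem proposition3p11:
  fixes M :: "'a measure" and X :: "nat \<Rightarrow> 'a \<Rightarrow> 'b::metric_space"
    and r :: real and I :: "nat set set"
  assumes "prob_space M"
    and "separable_space (euclidean :: 'b topology)"
    and "r \<ge> 0"
    and "admissible_ideal I"
    and "\<And>n. X n \<in> rand_vars M"
  shows "ky_fan_closed M (rough_stat_limit_set M I r X)"
  unfolding ky_fan_closed_def
proof (intro ballI impI)
  fix Y assume "Y \<in> rand_vars M"
    and "\<forall>e>0. \<exists>Z\<in>rough_stat_limit_set M I r X. ky_fan M Z Y < e"
  with assms have "Y \<in> rough_stat_limit_set M I r X"
    by (intro mem_rough_stat_limit_set_if_ky_fan_approx)
      (auto simp: admissible_ideal_def rand_vars_def)
  then show "\<exists>Z\<in>rough_stat_limit_set M I r X. AE w in M. Z w = Y w"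
    by auto
qed

end
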